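(* Let $P=(X,\leq_P)$ be a finite poset and let $M\subseteq X$. For every down-set $N$ of the induced sub-poset $P|_M$ define $$M{\updownarrow}_P N := {\uparrow}_P(M\setminus N)\ \cup\ {\downarrow}_P N,$$ and let $$\mathcal{D}_{M,N}(P):=\{D\in\mathcal{D}(P) : D\cap M=N\}.$$ Then for every $N\in\mathcal{D}(P|_M)$ the mapping $$\phi_{M,N}:\mathcal{D}_{M,N}(P)\to\mathcal{D}\big(P-M{\updownarrow}_P N\big),\qquad D\mapsto D\setminus {\downarrow}_P N,$$ is an order isomorphism (with respect to set inclusion), with inverse $\phi_{M,N}^{-1}(D')=D'\cup{\downarrow}_P N$ for all $D'\in\mathcal{D}(P-M{\updownarrow}_P N)$. In consequence, $$d(P)=\sum_{N\in\mathcal{D}(P|_M)} d\big(P-M{\updownarrow}_P N\big).$$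
   Context: For a finite poset $P=(X,\leq_P)$: a subset $Y\subseteq X$ is a down-set if $x\leq_P y$ and $y\in Y$ imply $x\in Y$. $\mathcal{D}(P)$ denotes the set of down-sets of $P$ and $d(P):=\#\mathcal{D}(P)$. For $y\in X$, ${\downarrow}_P y=\{x\in X: x\leq_P y\}$, ${\uparrow}_P y=\{x\in X: y\leq_P x\}$, and for $V\subseteq X$, ${\downarrow}_P V=\bigcup_{v\in V}{\downarrow}_P v$, ${\uparrow}_P V=\bigcup_{v\in V}{\uparrow}_P v$. For $Y\subseteq X$, $P|_Y$ is the induced sub-poset $(Y,\leq_P\cap(Y\times Y))$, and $P-Y$ denotes $P|_{X\setminus Y}$. *)

theory Defs
  imports Main
begin

text \<open>A finite poset is represented by a carrier set X and a relation le,
  required to be a partial order on X. Induced sub-posets keep the same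
  relation with a smaller carrier.\<close>

definition is_poset :: "'a set \<Rightarrow> ('a \<Rightarrow> 'a \<Rightarrow> bool) \<Rightarrow> bool" where
  "is_poset X le \<longleftrightarrow>
     (\<forall>x\<in>X. le x x) \<and>
     (\<forall>x\<in>X. \<forall>y\<in>X. le x y \<and> le y x \<longrightarrow> x = y) \<and>
     (\<forall>x\<in>X. \<forall>y\<in>X. \<forall>z\<in>X. le x y \<and> le y z \<longrightarrow> le x z)"

definition down_sets :: "'a set \<Rightarrow> ('a \<Rightarrow> 'a \<Rightarrow> bool) \<Rightarrow> 'a set set" where
  "down_sets X le = {Y. Y \<subseteq> X \<and> (\<forall>x\<in>X. \<forall>y\<in>Y. le x y \<longrightarrow> x \<in> Y)}"

definition num_down_sets :: "'a set \<Rightarrow> ('a \<Rightarrow> 'a \<Rightarrow> bool) \<Rightarrow> nat" where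
  "num_down_sets X le = card (down_sets X le)"

definition down_cl :: "'a set \<Rightarrow> ('a \<Rightarrow> 'a \<Rightarrow> bool) \<Rightarrow> 'a set \<Rightarrow> 'a set" where
  "down_cl X le V = {x\<in>X. \<exists>v\<in>V. le x v}"

definition up_cl :: "'a set \<Rightarrow> ('a \<Rightarrow> 'a \<Rightarrow> bool) \<Rightarrow> 'a set \<Rightarrow> 'a set" where
  "up_cl X le V = {x\<in>X. \<exists>v\<in>V. le v x}"

definition updown :: "'a set \<Rightarrow> ('a \<Rightarrow> 'a \<Rightarrow> bool) \<Rightarrow> 'a set \<Rightarrow> 'a set \<Rightarrow> 'a set" where
  "updown X le M N = up_cl X le (M - N) \<union> down_cl X le N"

definition down_sets_MN :: "'a set \<Rightarrow> ('a \<Rightarrow> 'a \<Rightarrow> bool) \<Rightarrow> 'a set \<Rightarrow> 'a set \<Rightarrow> 'a set set" where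
  "down_sets_MN X le M N = {D \<in> down_sets X le. D \<inter> M = N}"

end

theory Submission
  imports Defs
begin

text \<open>A down-set D of P with D \<inter> M = N contains down(N) and avoids up(M - N), so
  D - down(N) is a down-set of the remainder P - M updown N. Conversely, adding down(N) to a
  down-set of the remainder gives a down-set of P with trace N on M: an element below a point
  of the remainder cannot lie in up(M - N), since that set is upward closed. Grouping the
  down-sets of P by their trace on M then yields the counting formula.\<close>

lemma is_poset_iff: "is_poset X le \<longleftrightarrow> reflp_on X le \<and> antisymp_on X le \<and> transp_on X le"
  unfolding is_poset_def reflp_on_def antisymp_on_def transp_on_def by blast

lemma finite_down_sets: "finite X \<Longrightarrow> finite (down_sets X le)"
  by (rule finite_subset[of _ "Pow X"]) (auto simp: down_sets_def)

lemma Int_in_down_sets: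
  assumes "D \<in> down_sets X le" and "M \<subseteq> X"
  shows "D \<inter> M \<in> down_sets M le"
  using assms unfolding down_sets_def by auto

lemma down_sets_eq_UN_down_sets_MN:
  assumes "M \<subseteq> X"
  shows "down_sets X le = (\<Union>N \<in> down_sets M le. down_sets_MN X le M N)"
  using Int_in_down_sets[OF _ assms] unfolding down_sets_MN_def by blast

lemma num_down_sets_eq_sum_card_down_sets_MN:
  assumes "finite X" and "M \<subseteq> X"
  shows "num_down_sets X le = (\<Sum>N \<in> down_sets M le. card (down_sets_MN X le M N))"
  unfolding num_down_sets_def down_sets_eq_UN_down_sets_MN[OF assms(2)]
proof (rule card_UN_disjoint)
  show "finite (down_sets M le)"
    using assms by (simp add: finite_down_sets finite_subset)
  show "\<forall>N \<in> down_sets M le. finite (down_sets_MN X le M N)"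
    using finite_down_sets[OF assms(1)] unfolding down_sets_MN_def by auto
  show "\<forall>N1 \<in> down_sets M le. \<forall>N2 \<in> down_sets M le. N1 \<noteq> N2 \<longrightarrow>
      down_sets_MN X le M N1 \<inter> down_sets_MN X le M N2 = {}"
    unfolding down_sets_MN_def by blast
qed

lemma subset_down_cl: "reflp_on X le \<Longrightarrow> V \<subseteq> X \<Longrightarrow> V \<subseteq> down_cl X le V"
  unfolding down_cl_def reflp_on_def by blast

lemma subset_up_cl: "reflp_on X le \<Longrightarrow> V \<subseteq> X \<Longrightarrow> V \<subseteq> up_cl X le V"
  unfolding up_cl_def reflp_on_def by blast

lemma down_cl_in_down_sets:
  assumes "transp_on X le" and "V \<subseteq> X"
  shows "down_cl X le V \<in> down_sets X le"
  using assms transp_onD[OF assms(1)] unfolding down_sets_def down_cl_def by blast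

lemma up_cl_upward_closed:
  assumes "transp_on X le" and "V \<subseteq> X"
    and "x \<in> up_cl X le V" and "y \<in> X" and "le x y"
  shows "y \<in> up_cl X le V"
  using assms transp_onD[OF assms(1)] unfolding up_cl_def by blast

lemma down_cl_subset_down_set:
  "D \<in> down_sets X le \<Longrightarrow> V \<subseteq> D \<Longrightarrow> down_cl X le V \<subseteq> D"
  unfolding down_sets_def down_cl_def by blast

lemma down_set_disjoint_up_cl:
  "D \<in> down_sets X le \<Longrightarrow> V \<subseteq> X \<Longrightarrow> D \<inter> V = {} \<Longrightarrow> D \<inter> up_cl X le V = {}"
  unfolding down_sets_def up_cl_def by blast

lemma down_cl_Int_down_set: "N \<in> down_sets M le \<Longrightarrow> down_cl X le N \<inter> M \<subseteq> N"
  unfolding down_sets_def down_cl_def by blast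

lemma down_cl_subset_down_sets_MN:
  "D \<in> down_sets_MN X le M N \<Longrightarrow> down_cl X le N \<subseteq> D"
  unfolding down_sets_MN_def using down_cl_subset_down_set by blast

lemma Diff_down_cl_in_down_sets:
  assumes "M \<subseteq> X" and D: "D \<in> down_sets_MN X le M N"
  shows "D - down_cl X le N \<in> down_sets (X - updown X le M N) le"
proof -
  have D_down: "D \<in> down_sets X le" and "D \<inter> (M - N) = {}"
    using D unfolding down_sets_MN_def by auto
  then have "D \<inter> up_cl X le (M - N) = {}"
    using down_set_disjoint_up_cl assms(1) by (metis Diff_subset subset_trans)
  with D_down show ?thesis
    unfolding down_sets_def updown_def by auto
qed

lemma Un_down_cl_in_down_sets_MN:
  assumes "reflp_on X le" and "transp_on X le" and "M \<subseteq> X"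
    and N: "N \<in> down_sets M le"
    and D': "D' \<in> down_sets (X - updown X le M N) le"
  shows "D' \<union> down_cl X le N \<in> down_sets_MN X le M N"
proof -
  let ?dN = "down_cl X le N" and ?uMN = "up_cl X le (M - N)"
  have "N \<subseteq> M" using N unfolding down_sets_def by blast
  with \<open>M \<subseteq> X\<close> have "N \<subseteq> X" and "M - N \<subseteq> X" by auto
  have D'_sub: "D' \<subseteq> X - (?uMN \<union> ?dN)"
    and D'_closed: "\<And>x y. x \<in> X - (?uMN \<union> ?dN) \<Longrightarrow> y \<in> D' \<Longrightarrow> le x y \<Longrightarrow> x \<in> D'"
    using D' unfolding down_sets_def updown_def by auto
  have dN_closed: "\<And>x y. x \<in> X \<Longrightarrow> y \<in> ?dN \<Longrightarrow> le x y \<Longrightarrow> x \<in> ?dN"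
    using down_cl_in_down_sets[OF assms(2) \<open>N \<subseteq> X\<close>] unfolding down_sets_def by auto
  have "x \<in> D' \<union> ?dN" if "x \<in> X" "y \<in> D' \<union> ?dN" "le x y" for x y
  proof (cases "y \<in> ?dN")
    case True
    then show ?thesis using dN_closed that by blast
  next
    case False
    then have "y \<in> D'" using that(2) by blast
    then have "x \<notin> ?uMN"
      using up_cl_upward_closed[OF assms(2) \<open>M - N \<subseteq> X\<close> _ _ \<open>le x y\<close>] D'_sub by blast
    then show ?thesis
      using D'_closed[OF _ \<open>y \<in> D'\<close> \<open>le x y\<close>] \<open>x \<in> X\<close> by blast
  qed
  moreover have "(D' \<union> ?dN) \<inter> M = N"
  proof
    have "D' \<inter> M \<subseteq> N"
      using subset_up_cl[OF assms(1) \<open>M - N \<subseteq> X\<close>] D'_sub by blast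
    then show "(D' \<union> ?dN) \<inter> M \<subseteq> N"
      using down_cl_Int_down_set[OF N] by blast
    show "N \<subseteq> (D' \<union> ?dN) \<inter> M"
      using subset_down_cl[OF assms(1) \<open>N \<subseteq> X\<close>] \<open>N \<subseteq> M\<close> by blast
  qed
  moreover have "D' \<union> ?dN \<subseteq> X"
    using D'_sub unfolding down_cl_def by blast
  ultimately show ?thesis
    unfolding down_sets_MN_def down_sets_def by blast
qed

lemma Un_down_cl_Diff_down_cl:
  "D' \<in> down_sets (X - updown X le M N) le \<Longrightarrow> (D' \<union> down_cl X le N) - down_cl X le N = D'"
  unfolding down_sets_def updown_def by blast

lemma bij_betw_down_sets_MN:
  assumes "reflp_on X le" and "transp_on X le" and "M \<subseteq> X" and "N \<in> down_sets M le"
  shows "bij_betw (\<lambda>D. D - down_cl X le N) (down_sets_MN X le M N)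
           (down_sets (X - updown X le M N) le)"
proof (rule bij_betw_byWitness[where f' = "\<lambda>D'. D' \<union> down_cl X le N"])
  show "\<forall>D \<in> down_sets_MN X le M N. D - down_cl X le N \<union> down_cl X le N = D"
    using down_cl_subset_down_sets_MN by blast
  show "\<forall>D' \<in> down_sets (X - updown X le M N) le. D' \<union> down_cl X le N - down_cl X le N = D'"
    using Un_down_cl_Diff_down_cl by blast
  show "(\<lambda>D. D - down_cl X le N) ` down_sets_MN X le M N \<subseteq> down_sets (X - updown X le M N) le"
    using Diff_down_cl_in_down_sets[OF assms(3)] by blast
  show "(\<lambda>D'. D' \<union> down_cl X le N) ` down_sets (X - updown X le M N) le \<subseteq> down_sets_MN X le M N"
    using Un_down_cl_in_down_sets_MN[OF assms] by blast
qed

theorem theorem1: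
  fixes X :: "'a set" and le :: "'a \<Rightarrow> 'a \<Rightarrow> bool" and M :: "'a set"
  assumes "finite X" and "is_poset X le" and "M \<subseteq> X"
  shows "(\<forall>N \<in> down_sets M le.
            bij_betw (\<lambda>D. D - down_cl X le N) (down_sets_MN X le M N)
                     (down_sets (X - updown X le M N) le)
          \<and> (\<forall>D1 \<in> down_sets_MN X le M N. \<forall>D2 \<in> down_sets_MN X le M N.
                D1 \<subseteq> D2 \<longleftrightarrow> D1 - down_cl X le N \<subseteq> D2 - down_cl X le N)
          \<and> (\<forall>D' \<in> down_sets (X - updown X le M N) le.
                D' \<union> down_cl X le N \<in> down_sets_MN X le M N
              \<and> (D' \<union> down_cl X le N) - down_cl X le N = D'))
       \<and> num_down_sets X le
           = (\<Sum>N \<in> down_sets M le. num_down_sets (X - updown X le M N) le)"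
proof -
  have refl: "reflp_on X le" and trans: "transp_on X le"
    using assms(2) by (auto simp: is_poset_iff)
  note bij = bij_betw_down_sets_MN[OF refl trans assms(3)]
  have "num_down_sets X le = (\<Sum>N \<in> down_sets M le. card (down_sets_MN X le M N))"
    using num_down_sets_eq_sum_card_down_sets_MN[OF assms(1,3)] .
  also have "\<dots> = (\<Sum>N \<in> down_sets M le. num_down_sets (X - updown X le M N) le)"
    unfolding num_down_sets_def using bij by (auto intro: sum.cong bij_betw_same_card)
  finally have count: "num_down_sets X le
      = (\<Sum>N \<in> down_sets M le. num_down_sets (X - updown X le M N) le)" .
  have order: "D1 \<subseteq> D2 \<longleftrightarrow> D1 - down_cl X le N \<subseteq> D2 - down_cl X le N"
    if "D1 \<in> down_sets_MN X le M N" and "D2 \<in> down_sets_MN X le M N" for N D1 D2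
    using down_cl_subset_down_sets_MN[OF that(1)] down_cl_subset_down_sets_MN[OF that(2)] by blast
  show ?thesis
    using count bij order Un_down_cl_Diff_down_cl Un_down_cl_in_down_sets_MN[OF refl trans assms(3)]
    by (intro conjI ballI) simp_all
qed

end
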